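(* Let $a_1,\dots,a_n$ be positive integers and $B,k$ integers with $\sum_{i=1}^n a_i=Bk$. Let $G$ be the complete bipartite graph $K_{k,n}$ with parts $\{v_1,\dots,v_k\}$ and $\{w_1,\dots,w_n\}$, where every edge incident to $w_i$ has weight $a_i$, and put target outdegrees $d_{w_i}=a_i$ and $d_{v_j}=Bk-B$. Then $\{a_1,\dots,a_n\}$ (as a multiset) can be partitioned into $k$ parts each with sum exactly $B$ if and only if $G$ has an orientation in which every vertex $u$ has total weight of outgoing edges exactly $d_u$.
   Context: An orientation of an undirected graph chooses a direction for each edge; the out-weight of a vertex is the sum of weights of the edges directed out of it. *)

theory Defs
  imports Main
begin

text \<open>General weighted undirected graphs: an edge is a 2-element vertex set,
  an orientation chooses for each edge its tail (the endpoint it is directed out of).\<close>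

definition is_orientation :: "'a set set \<Rightarrow> ('a set \<Rightarrow> 'a) \<Rightarrow> bool" where
  "is_orientation E h \<longleftrightarrow> (\<forall>e\<in>E. h e \<in> e)"

definition out_weight :: "'a set set \<Rightarrow> ('a set \<Rightarrow> int) \<Rightarrow> ('a set \<Rightarrow> 'a) \<Rightarrow> 'a \<Rightarrow> int" where
  "out_weight E wt h u = (\<Sum>e\<in>{e\<in>E. h e = u}. wt e)"

datatype vtx = V nat | W nat

definition Kkn_vertices :: "nat \<Rightarrow> nat \<Rightarrow> vtx set" where
  "Kkn_vertices k n = {V j | j. j < k} \<union> {W i | i. i < n}"

definition Kkn_edges :: "nat \<Rightarrow> nat \<Rightarrow> vtx set set" where
  "Kkn_edges k n = {{V j, W i} | j i. j < k \<and> i < n}"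

definition Kkn_weight :: "(nat \<Rightarrow> int) \<Rightarrow> vtx set \<Rightarrow> int" where
  "Kkn_weight a e = a (THE i. W i \<in> e)"

definition Kkn_target :: "(nat \<Rightarrow> int) \<Rightarrow> int \<Rightarrow> nat \<Rightarrow> vtx \<Rightarrow> int" where
  "Kkn_target a B k u = (case u of W i \<Rightarrow> a i | V j \<Rightarrow> B * int k - B)"

end

theory Submission
  imports Defs
begin

text \<open>Read an orientation of K_{k,n} as an assignment: w_i is sent to the part v_j whose edge
  v_j w_i points out of w_i. The target at w_i forces exactly one such j (as a_i > 0), so this
  assignment is a function p. The out-weight of v_j is the total weight minus the weight sent to
  v_j, and since the total is Bk the target Bk - B at v_j says exactly that v_j receives weight B.\<close>

lemma Kkn_edge_eq_iff: "{V j, W i} = {V j', W i'} \<longleftrightarrow> j = j' \<and> i = i'"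
  by (auto simp: doubleton_eq_iff)

lemma the_W_in_edge: "(THE i'. W i' \<in> {V j, W i}) = i"
  by (rule the_equality) auto

lemma the_V_in_edge: "(THE j'. V j' \<in> {V j, W i}) = j"
  by (rule the_equality) auto

lemma Kkn_weight_edge: "Kkn_weight a {V j, W i} = a i"
  by (simp add: Kkn_weight_def the_W_in_edge)

lemma out_weight_Kkn:
  "out_weight (Kkn_edges k n) (Kkn_weight a) h u =
     (\<Sum>(j, i)\<in>{(j, i). j < k \<and> i < n \<and> h {V j, W i} = u}. a i)"
proof -
  let ?S = "{(j, i). j < k \<and> i < n \<and> h {V j, W i} = u}"
  let ?edge = "\<lambda>(j, i). {V j, W i}"
  have edges: "{e \<in> Kkn_edges k n. h e = u} = ?edge ` ?S"
    unfolding Kkn_edges_def by auto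
  have "inj_on ?edge ?S"
    by (auto simp: inj_on_def Kkn_edge_eq_iff)
  then show ?thesis
    unfolding out_weight_def edges by (auto simp: sum.reindex Kkn_weight_edge intro: sum.cong)
qed

lemma orientation_Kkn_edge:
  assumes "is_orientation (Kkn_edges k n) h" "j < k" "i < n"
  shows "h {V j, W i} = V j \<or> h {V j, W i} = W i"
  using assms unfolding is_orientation_def Kkn_edges_def by blast

lemma out_weight_Kkn_W:
  assumes h: "is_orientation (Kkn_edges k n) h" and i: "i < n"
  shows "out_weight (Kkn_edges k n) (Kkn_weight a) h (W i) =
     int (card {j. j < k \<and> h {V j, W i} = W i}) * a i"
proof -
  have "{(j, i'). j < k \<and> i' < n \<and> h {V j, W i'} = W i} =
      (\<lambda>j. (j, i)) ` {j. j < k \<and> h {V j, W i} = W i}"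
    using orientation_Kkn_edge[OF h] i by fastforce
  then show ?thesis
    by (simp add: out_weight_Kkn sum.reindex inj_on_def)
qed

lemma out_weight_Kkn_V:
  assumes h: "is_orientation (Kkn_edges k n) h" and j: "j < k"
  shows "out_weight (Kkn_edges k n) (Kkn_weight a) h (V j) =
     (\<Sum>i<n. a i) - (\<Sum>i\<in>{i. i < n \<and> h {V j, W i} = W i}. a i)"
proof -
  have "{(j', i). j' < k \<and> i < n \<and> h {V j', W i} = V j} =
      (\<lambda>i. (j, i)) ` ({..<n} - {i. i < n \<and> h {V j, W i} = W i})"
    using orientation_Kkn_edge[OF h] j by fastforce
  then show ?thesis
    by (simp add: out_weight_Kkn sum.reindex inj_on_def sum_diff subset_eq)
qed

lemma balanced_orientation_Kkn_iff:
  assumes h: "is_orientation (Kkn_edges k n) h"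
    and pos: "\<forall>i<n. a i > 0"
    and sum: "(\<Sum>i<n. a i) = B * int k"
  shows "(\<forall>u\<in>Kkn_vertices k n.
            out_weight (Kkn_edges k n) (Kkn_weight a) h u = Kkn_target a B k u)
     \<longleftrightarrow> (\<forall>i<n. card {j. j < k \<and> h {V j, W i} = W i} = 1) \<and>
         (\<forall>j<k. (\<Sum>i\<in>{i. i < n \<and> h {V j, W i} = W i}. a i) = B)"
proof -
  have W: "out_weight (Kkn_edges k n) (Kkn_weight a) h (W i) = Kkn_target a B k (W i)
      \<longleftrightarrow> card {j. j < k \<and> h {V j, W i} = W i} = 1" if "i < n" for i
    using pos that by (force simp: out_weight_Kkn_W[OF h] Kkn_target_def)
  have V: "out_weight (Kkn_edges k n) (Kkn_weight a) h (V j) = Kkn_target a B k (V j)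
      \<longleftrightarrow> (\<Sum>i\<in>{i. i < n \<and> h {V j, W i} = W i}. a i) = B" if "j < k" for j
    using that by (auto simp: out_weight_Kkn_V[OF h] Kkn_target_def sum)
  show ?thesis
    unfolding Kkn_vertices_def using W V by blast
qed

lemma Kkn_orientation_of_assignment:
  obtains h where "is_orientation (Kkn_edges k n) h"
    and "\<And>i j. h {V j, W i} = W i \<longleftrightarrow> p i = j"
proof
  define h where "h e = (let i = THE i. W i \<in> e; j = THE j. V j \<in> e
    in if p i = j then W i else V j)" for e
  have h_edge: "h {V j, W i} = (if p i = j then W i else V j)" for i j
    by (simp add: h_def the_W_in_edge the_V_in_edge)
  show "is_orientation (Kkn_edges k n) h"
    unfolding is_orientation_def Kkn_edges_def by (auto simp: h_edge split: if_splits)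
  show "h {V j, W i} = W i \<longleftrightarrow> p i = j" for i j
    by (simp add: h_edge)
qed

lemma Kkn_assignment_of_orientation:
  assumes "\<forall>i<n. card {j. j < k \<and> h {V j, W i} = W i} = 1"
  obtains p where "\<forall>i<n. p i < k"
    and "\<And>i j. i < n \<Longrightarrow> j < k \<and> h {V j, W i} = W i \<longleftrightarrow> p i = j"
proof
  have unique: "\<exists>!j. j < k \<and> h {V j, W i} = W i" if i: "i < n" for i
  proof -
    obtain j0 where "{j. j < k \<and> h {V j, W i} = W i} = {j0}"
      using assms i by (meson card_1_singletonE)
    then show ?thesis
      by (auto simp: set_eq_iff)
  qed
  define p where "p i = (THE j. j < k \<and> h {V j, W i} = W i)" for i
  show "\<forall>i<n. p i < k"
    unfolding p_def using theI'[OF unique] by blast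
  show "j < k \<and> h {V j, W i} = W i \<longleftrightarrow> p i = j" if "i < n" for i j
    unfolding p_def using theI'[OF unique] the1_equality[OF unique] that by blast
qed

theorem lemma6p4:
  fixes a :: "nat \<Rightarrow> int" and n k :: nat and B :: int
  assumes pos: "\<forall>i<n. a i > 0"
    and sum: "(\<Sum>i<n. a i) = B * int k"
  shows "(\<exists>p :: nat \<Rightarrow> nat. (\<forall>i<n. p i < k) \<and>
            (\<forall>j<k. (\<Sum>i\<in>{i. i < n \<and> p i = j}. a i) = B))
     \<longleftrightarrow> (\<exists>h. is_orientation (Kkn_edges k n) h \<and>
            (\<forall>u\<in>Kkn_vertices k n.
               out_weight (Kkn_edges k n) (Kkn_weight a) h u = Kkn_target a B k u))"
  (is "?partition \<longleftrightarrow> ?orientation")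
proof
  assume ?partition
  then obtain p where p: "\<forall>i<n. p i < k" "\<forall>j<k. (\<Sum>i\<in>{i. i < n \<and> p i = j}. a i) = B"
    by blast
  obtain h where h: "is_orientation (Kkn_edges k n) h"
    and toward_W: "\<And>i j. h {V j, W i} = W i \<longleftrightarrow> p i = j"
    using Kkn_orientation_of_assignment[of k n p] by blast
  have "{j. j < k \<and> h {V j, W i} = W i} = {p i}" if "i < n" for i
    using p(1) that by (auto simp: toward_W)
  with p(2) show ?orientation
    using balanced_orientation_Kkn_iff[OF h pos sum] h by (auto simp: toward_W)
next
  assume ?orientation
  then obtain h where "is_orientation (Kkn_edges k n) h"
    and card: "\<forall>i<n. card {j. j < k \<and> h {V j, W i} = W i} = 1"
    and sums: "\<forall>j<k. (\<Sum>i\<in>{i. i < n \<and> h {V j, W i} = W i}. a i) = B"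
    using balanced_orientation_Kkn_iff[OF _ pos sum] by blast
  obtain p where "\<forall>i<n. p i < k"
    and p: "\<And>i j. i < n \<Longrightarrow> j < k \<and> h {V j, W i} = W i \<longleftrightarrow> p i = j"
    using Kkn_assignment_of_orientation[OF card] by blast
  moreover have "{i. i < n \<and> p i = j} = {i. i < n \<and> h {V j, W i} = W i}" if "j < k" for j
    using p that by blast
  ultimately show ?partition
    using sums by (intro exI[of _ p]) simp
qed

end
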